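(* Let $f,g:\mathbb N\to\mathbb C$ and $\beta\in\mathbb C$ satisfy: for every even $n\in\mathbb N$, $g(n+2)f(n+2)-g(n)f(n)\mathbf 1_{\{n\ge2\}}=\beta$. Assume $|f(2n)|>0$ for all $n\ge1$ and that $M_f=\lim_{n\to\infty}n/|f(2n)|\in[0,\infty]$ exists. Let $\mathbb D_{f,\beta}=\{\alpha\in\mathbb C: |1-\alpha\beta|<1,\ |\alpha|<M_f\}$. Then $$\Big[N,\tfrac i2\log\big(g_{N+2}L^2\big)\Big]=-i\mathbf 1$$ holds on the subspace $\mathrm{LH}\{(f_NL^{*2})^n\xi_{\alpha,f}: n\in\mathbb N,\ \alpha\in\mathbb D_{f,\beta}\}$, where $\xi_{\alpha,f}=e^{\alpha f_NL^{*2}}\Omega$.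
   Context: $\ell^2=\ell^2(\mathbb N)$, $\mathbb N=\{0,1,\dots\}$, basis $(\xi_n)$, $\Omega=\xi_0$; $N\xi_n=n\xi_n$ (self-adjoint, maximal domain). $f_NL^{*2}$: $\xi_n\mapsto f(n+2)\xi_{n+2}$; $g_{N+2}L^2$: $\xi_n\mapsto g(n)\xi_{n-2}$ ($n\ge2$), $\xi_0,\xi_1\mapsto0$ (maximal domains). Exponentials by power series on the set where the series converges. For a linear operator $A$, $\mathrm D(\log A)=\{f\in\bigcap_{k\ge0}\mathrm D(A^k):\lim_K\sum_{k=1}^K\frac1k(\mathbf 1-A)^kf\text{ exists}\}$ and $\log Af=-\sum_{k\ge1}\frac1k(\mathbf1-A)^kf$. The commutator $[A,B]=AB-BA$ is defined on $\mathrm D(AB)\cap\mathrm D(BA)$; "$[A,B]=C$ on a subspace $\mathcal D$" means $\mathcal D\subset\mathrm D(AB)\cap\mathrm D(BA)$ and $(AB-BA)\varphi=C\varphi$ for all $\varphi\in\mathcal D$. LH denotes linear hull. *)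

theory Defs
  imports Complex_Main "HOL-Library.Extended_Real"
begin

text \<open>Vectors of l2(N) are represented as coefficient sequences (w.r.t. the basis xi_n);
  (possibly unbounded) linear operators as partial maps, the domain being where they are defined.\<close>

type_synonym vec = "nat \<Rightarrow> complex"
type_synonym op = "vec \<Rightarrow> vec option"

definition l2 :: "vec set" where
  "l2 = {x. summable (\<lambda>n. (cmod (x n))^2)}"

definition l2norm :: "vec \<Rightarrow> real" where
  "l2norm x = sqrt (\<Sum>n. (cmod (x n))^2)"

definition conv_l2 :: "(nat \<Rightarrow> vec) \<Rightarrow> vec \<Rightarrow> bool" where
  "conv_l2 S y \<longleftrightarrow> y \<in> l2 \<and> (\<forall>K. S K \<in> l2) \<and>
     (\<lambda>K. l2norm (\<lambda>m. S K m - y m)) \<longlonglongrightarrow> 0"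

definition lim_l2 :: "(nat \<Rightarrow> vec) \<Rightarrow> vec option" where
  "lim_l2 S = (if \<exists>y. conv_l2 S y then Some (THE y. conv_l2 S y) else None)"

definition basis_vec :: "nat \<Rightarrow> vec" where
  "basis_vec k = (\<lambda>n. if n = k then 1 else 0)"

definition Omega :: vec where
  "Omega = basis_vec 0"

definition dom_op :: "op \<Rightarrow> vec set" where
  "dom_op A = {x. A x \<noteq> None}"

definition I_op :: op where
  "I_op x = (if x \<in> l2 then Some x else None)"

definition comp_op :: "op \<Rightarrow> op \<Rightarrow> op" where
  "comp_op A B x = (case B x of None \<Rightarrow> None | Some y \<Rightarrow> A y)"

definition diff_op :: "op \<Rightarrow> op \<Rightarrow> op" where
  "diff_op A B x = (case (A x, B x) of (Some a, Some b) \<Rightarrow> Some (\<lambda>m. a m - b m) | _ \<Rightarrow> None)"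

definition scale_op :: "complex \<Rightarrow> op \<Rightarrow> op" where
  "scale_op c A x = (case A x of None \<Rightarrow> None | Some y \<Rightarrow> Some (\<lambda>m. c * y m))"

definition pow_op :: "op \<Rightarrow> nat \<Rightarrow> op" where
  "pow_op A k = ((comp_op A) ^^ k) I_op"

definition exp_op :: "op \<Rightarrow> op" where
  "exp_op A x = (if x \<in> (\<Inter>k. dom_op (pow_op A k))
     then lim_l2 (\<lambda>K. \<lambda>m. \<Sum>k\<le>K. (1 / of_nat (fact k)) * the (pow_op A k x) m)
     else None)"

definition log_op :: "op \<Rightarrow> op" where
  "log_op A x = (if x \<in> (\<Inter>k. dom_op (pow_op A k)) \<and> x \<in> (\<Inter>k. dom_op (pow_op (diff_op I_op A) k))
     then (case lim_l2 (\<lambda>K. \<lambda>m. \<Sum>k\<in>{1..K}. (1 / of_nat k) * the (pow_op (diff_op I_op A) k x) m) of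
             None \<Rightarrow> None | Some y \<Rightarrow> Some (\<lambda>m. - y m))
     else None)"

definition N_op :: op where
  "N_op x = (if x \<in> l2 \<and> (\<lambda>n. of_nat n * x n) \<in> l2 then Some (\<lambda>n. of_nat n * x n) else None)"

text \<open>f_N L^{*2}: xi_n |-> f(n+2) xi_{n+2}, maximal domain.\<close>
definition raise_op :: "(nat \<Rightarrow> complex) \<Rightarrow> op" where
  "raise_op f x = (let y = (\<lambda>m. if 2 \<le> m then f m * x (m - 2) else 0) in
     if x \<in> l2 \<and> y \<in> l2 then Some y else None)"

text \<open>g_{N+2} L^2: xi_n |-> g(n) xi_{n-2} (n>=2), xi_0, xi_1 |-> 0, maximal domain.\<close>
definition lower_op :: "(nat \<Rightarrow> complex) \<Rightarrow> op" where
  "lower_op g x = (let y = (\<lambda>m. g (m + 2) * x (m + 2)) in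
     if x \<in> l2 \<and> y \<in> l2 then Some y else None)"

definition comm_eq_on :: "op \<Rightarrow> op \<Rightarrow> op \<Rightarrow> vec set \<Rightarrow> bool" where
  "comm_eq_on A B C D \<longleftrightarrow>
     D \<subseteq> dom_op (comp_op A B) \<inter> dom_op (comp_op B A) \<and>
     (\<forall>\<phi>\<in>D. diff_op (comp_op A B) (comp_op B A) \<phi> = C \<phi>)"

definition lin_hull :: "vec set \<Rightarrow> vec set" where
  "lin_hull S = {x. \<exists>k (v :: nat \<Rightarrow> vec) (c :: nat \<Rightarrow> complex).
      (\<forall>i<k. v i \<in> S) \<and> x = (\<lambda>m. \<Sum>i<k. c i * v i m)}"

definition D_set :: "complex \<Rightarrow> ereal \<Rightarrow> complex set" where
  "D_set \<beta> Mf = {\<alpha>. cmod (1 - \<alpha> * \<beta>) < 1 \<and> ereal (cmod \<alpha>) < Mf}"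

definition xi_vec :: "complex \<Rightarrow> (nat \<Rightarrow> complex) \<Rightarrow> vec option" where
  "xi_vec \<alpha> f = exp_op (scale_op \<alpha> (raise_op f)) Omega"

end

theory Submission
  imports Defs "HOL-Real_Asymp.Real_Asymp" "HOL-Analysis.Analysis"
begin

text \<open>On vectors of the form \<open>p(N/2) \<xi>\<^sub>\<alpha>\<close> the raising operator acts by
  \<open>p(j) \<mapsto> j p(j - 1) / \<alpha>\<close>, so \<open>w\<^sub>n = (f\<^sub>N L*\<^sup>2)\<^sup>n \<xi>\<^sub>\<alpha> = \<alpha>\<^sup>-\<^sup>n P\<^sub>n(N/2) \<xi>\<^sub>\<alpha>\<close>
  with \<open>P\<^sub>n\<close> the falling factorial. The hypothesis on \<open>f, g\<close> says
  \<open>g(2j+2) f(2j+2) = (j+1) \<beta>\<close>, whence the lowering operator \<open>B = g\<^bsub>N+2\<^esub>L\<^sup>2\<close> acts as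
  \<open>B w\<^sub>n = \<alpha>\<beta> w\<^sub>n + n\<beta> w\<^bsub>n-1\<^esub>\<close>. Thus \<open>1 - B\<close> is triangular on the linear hull with
  diagonal \<open>1 - \<alpha>\<beta>\<close> of modulus below one; its powers decay geometrically there, and
  \<open>-log B = \<Sum>\<^bsub>k\<ge>1\<^esub> (1 - B)\<^sup>k / k\<close> converges. Since \<open>[N, 1 - B] = 2B\<close>, the commutators
  \<open>[N, (1 - B)\<^sup>k] / k = 2((1 - B)\<^bsup>k-1\<^esup> - (1 - B)\<^sup>k)\<close> telescope to \<open>[N, -log B] = 2\<close>.
  The bound \<open>|\<alpha>| < M\<^sub>f\<close> makes the coefficients of \<open>\<xi>\<^sub>\<alpha>\<close> decay geometrically, which puts
  all these vectors in \<open>l\<^sup>2\<close>.\<close>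

subsection \<open>Square-summable sequences\<close>

lemma l2_zero [simp]: "(\<lambda>_. 0) \<in> l2"
  by (simp add: l2_def)

lemma l2norm_zero [simp]: "l2norm (\<lambda>_. 0) = 0"
  by (simp add: l2norm_def)

lemma l2_finite_support:
  assumes "finite A" "\<And>m. m \<notin> A \<Longrightarrow> x m = 0"
  shows "x \<in> l2"
  unfolding l2_def using summable_finite[OF assms(1), of "\<lambda>n. (cmod (x n))^2"] assms(2) by simp

lemma l2_single: "(\<lambda>m. if m = i then c else 0) \<in> l2"
  by (rule l2_finite_support[of "{i}"]) auto

lemma l2norm_single: "l2norm (\<lambda>m. if m = i then c else 0) = cmod c"
proof -
  have "(\<lambda>m. (cmod (if m = i then c else 0))^2) = (\<lambda>m. if m = i then (cmod c)^2 else 0)" by auto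
  then show ?thesis using sums_single[of i "\<lambda>_. (cmod c)^2"] by (simp add: l2norm_def sums_iff)
qed

lemma l2_geometric_bound:
  assumes "\<And>m. cmod (x m) \<le> C * \<rho>^m" "0 \<le> \<rho>" "\<rho> < 1"
  shows "x \<in> l2"
proof -
  have "summable (\<lambda>m. C^2 * (\<rho>^2)^m)"
    using assms by (intro summable_mult) (simp add: power_less_one_iff abs_square_less_1)
  moreover have "norm ((cmod (x m))^2) \<le> C^2 * (\<rho>^2)^m" for m
  proof -
    have "(cmod (x m))^2 \<le> (C * \<rho>^m)^2" using assms(1) by (intro power_mono) auto
    thus ?thesis by (simp add: power_mult_distrib power_mult[symmetric] mult.commute)
  qed
  ultimately show ?thesis unfolding l2_def by (blast intro: summable_comparison_test')
qed

lemma l2norm_nonneg: "x \<in> l2 \<Longrightarrow> 0 \<le> l2norm x"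
  unfolding l2norm_def l2_def by (simp add: suminf_nonneg)

lemma partial_sum_le_l2norm:
  assumes "x \<in> l2"
  shows "sqrt (\<Sum>m<M. (cmod (x m))^2) \<le> l2norm x"
  unfolding l2norm_def using assms unfolding l2_def
  by (intro real_sqrt_le_mono sum_le_suminf) auto

lemma coord_le_l2norm:
  assumes "x \<in> l2"
  shows "cmod (x m) \<le> l2norm x"
proof -
  have "sqrt ((cmod (x m))^2) \<le> sqrt (\<Sum>i<Suc m. (cmod (x i))^2)"
    by (intro real_sqrt_le_mono member_le_sum) auto
  also have "\<dots> \<le> l2norm x" by (rule partial_sum_le_l2norm[OF assms])
  finally show ?thesis by simp
qed

lemma l2_partial_sums_bounded:
  assumes "\<And>M. (\<Sum>m<M. (cmod (x m))^2) \<le> c^2" "0 \<le> c"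
  shows "x \<in> l2" "l2norm x \<le> c"
proof -
  have s: "summable (\<lambda>m. (cmod (x m))^2)"
    by (rule summableI_nonneg_bounded[where x="c^2"]) (use assms in auto)
  then show "x \<in> l2" by (simp add: l2_def)
  have "(\<Sum>m. (cmod (x m))^2) \<le> c^2" by (rule suminf_le_const[OF s assms(1)])
  hence "l2norm x \<le> sqrt (c^2)" unfolding l2norm_def by (rule real_sqrt_le_mono)
  with assms(2) show "l2norm x \<le> c" by simp
qed

lemma l2_lincomb_bound:
  fixes a b :: complex
  assumes "x \<in> l2" "y \<in> l2"
  defines "c \<equiv> cmod a * l2norm x + cmod b * l2norm y"
  shows "(\<lambda>m. a * x m + b * y m) \<in> l2 \<and> l2norm (\<lambda>m. a * x m + b * y m) \<le> c"
proof -
  have c0: "0 \<le> c" using assms by (simp add: l2norm_nonneg)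
  have sums: "(\<Sum>m<M. (cmod (a * x m + b * y m))^2) \<le> c^2" for M
  proof -
    have "L2_set (\<lambda>m. cmod (a * x m + b * y m)) {..<M}
        \<le> L2_set (\<lambda>m. cmod a * cmod (x m) + cmod b * cmod (y m)) {..<M}"
      by (intro L2_set_mono) (auto intro: order_trans[OF norm_triangle_ineq] simp: norm_mult)
    also have "\<dots> \<le> L2_set (\<lambda>m. cmod a * cmod (x m)) {..<M} + L2_set (\<lambda>m. cmod b * cmod (y m)) {..<M}"
      by (rule L2_set_triangle_ineq)
    also have "\<dots> = cmod a * L2_set (\<lambda>m. cmod (x m)) {..<M} + cmod b * L2_set (\<lambda>m. cmod (y m)) {..<M}"
      by (simp add: L2_set_right_distrib)
    also have "\<dots> \<le> c"
      using partial_sum_le_l2norm[OF assms(1), of M] partial_sum_le_l2norm[OF assms(2), of M]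
      unfolding c_def by (intro add_mono mult_left_mono) (auto simp: L2_set_def)
    finally have "sqrt (\<Sum>m<M. (cmod (a * x m + b * y m))^2) \<le> c" by (simp add: L2_set_def)
    hence "(sqrt (\<Sum>m<M. (cmod (a * x m + b * y m))^2))^2 \<le> c^2"
      by (intro power_mono) (auto intro: sum_nonneg)
    thus ?thesis by (simp add: sum_nonneg)
  qed
  show ?thesis using l2_partial_sums_bounded[OF sums c0] by blast
qed

lemma l2_lincomb: "x \<in> l2 \<Longrightarrow> y \<in> l2 \<Longrightarrow> (\<lambda>m. a * x m + b * y m) \<in> l2"
  using l2_lincomb_bound by blast

lemma l2norm_lincomb_le:
  "x \<in> l2 \<Longrightarrow> y \<in> l2 \<Longrightarrow> l2norm (\<lambda>m. a * x m + b * y m) \<le> cmod a * l2norm x + cmod b * l2norm y"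
  using l2_lincomb_bound by blast

lemma l2_scale: "x \<in> l2 \<Longrightarrow> (\<lambda>m. a * x m) \<in> l2"
  using l2_lincomb[of x x a 0] by simp

lemma l2norm_scale_le: "x \<in> l2 \<Longrightarrow> l2norm (\<lambda>m. a * x m) \<le> cmod a * l2norm x"
  using l2norm_lincomb_le[of x x a 0] by simp

lemma l2_sum:
  assumes "finite A" "\<And>k. k \<in> A \<Longrightarrow> y k \<in> l2"
  shows "(\<lambda>m. \<Sum>k\<in>A. y k m) \<in> l2 \<and> l2norm (\<lambda>m. \<Sum>k\<in>A. y k m) \<le> (\<Sum>k\<in>A. l2norm (y k))"
  using assms
proof (induction A rule: finite_induct)
  case (insert a A)
  then show ?case
    using l2_lincomb_bound[of "y a" "\<lambda>m. \<Sum>k\<in>A. y k m" 1 1] by simp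
qed simp

lemma sum_atMost_split:
  fixes h :: "nat \<Rightarrow> 'a::comm_monoid_add"
  assumes "K \<le> K'"
  shows "(\<Sum>k\<le>K'. h k) = (\<Sum>k\<le>K. h k) + (\<Sum>k\<in>{K<..K'}. h k)"
proof -
  have "{..K'} = {..K} \<union> {K<..K'}" "{..K} \<inter> {K<..K'} = {}" using assms by auto
  thus ?thesis by (simp add: sum.union_disjoint)
qed

lemma l2_series_tail:
  fixes K :: nat
  assumes y: "\<And>k. y k \<in> l2" and sm: "summable (\<lambda>k. l2norm (y k))"
  defines "R \<equiv> (\<Sum>k. l2norm (y k)) - (\<Sum>k\<le>K. l2norm (y k))"
  shows "(\<lambda>m. (\<Sum>k\<le>K. y k m) - (\<Sum>k. y k m)) \<in> l2"
    and "l2norm (\<lambda>m. (\<Sum>k\<le>K. y k m) - (\<Sum>k. y k m)) \<le> R"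
proof -
  define S where "S = (\<lambda>K m. \<Sum>k\<le>K. y k m)"
  have nn: "0 \<le> l2norm (y k)" for k using y l2norm_nonneg by blast
  have R_nonneg: "0 \<le> R" unfolding R_def using sum_le_suminf[OF sm, of "{..K}"] nn by simp
  have "summable (\<lambda>k. y k m)" for m
    by (rule summable_norm_cancel, rule summable_comparison_test'[OF sm]) (simp add: coord_le_l2norm[OF y])
  hence SY: "(\<lambda>K. S K m) \<longlonglongrightarrow> (\<Sum>k. y k m)" for m unfolding S_def by (rule summable_LIMSEQ')
  have "(\<Sum>m<M. (cmod (S K' m - S K m))^2) \<le> R^2" if "K \<le> K'" for K' M
  proof -
    have eq: "(\<lambda>m. S K' m - S K m) = (\<lambda>m. \<Sum>k\<in>{K<..K'}. y k m)"
      unfolding S_def sum_atMost_split[OF that] by simp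
    have "(\<Sum>k\<in>{K<..K'}. l2norm (y k)) = (\<Sum>k\<le>K'. l2norm (y k)) - (\<Sum>k\<le>K. l2norm (y k))"
      using sum_atMost_split[OF that, of "\<lambda>k. l2norm (y k)"] by simp
    also have "\<dots> \<le> R" unfolding R_def using sum_le_suminf[OF sm, of "{..K'}"] nn by simp
    finally have "sqrt (\<Sum>m<M. (cmod (S K' m - S K m))^2) \<le> R"
      using l2_sum[of "{K<..K'}" y] y partial_sum_le_l2norm[of "\<lambda>m. S K' m - S K m" M]
      unfolding eq by fastforce
    hence "(sqrt (\<Sum>m<M. (cmod (S K' m - S K m))^2))^2 \<le> R^2"
      by (intro power_mono) (auto intro: sum_nonneg)
    thus ?thesis by (simp add: sum_nonneg)
  qed
  moreover have "(\<lambda>K'. \<Sum>m<M. (cmod (S K' m - S K m))^2) \<longlonglongrightarrow> (\<Sum>m<M. (cmod ((\<Sum>k. y k m) - S K m))^2)" for M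
    by (intro tendsto_intros SY)
  ultimately have "(\<Sum>m<M. (cmod ((\<Sum>k. y k m) - S K m))^2) \<le> R^2" for M
    using LIMSEQ_le_const2 by blast
  then have "(\<Sum>m<M. (cmod (S K m - (\<Sum>k. y k m)))^2) \<le> R^2" for M
    by (simp add: norm_minus_commute)
  from l2_partial_sums_bounded[OF this R_nonneg] show
    "(\<lambda>m. (\<Sum>k\<le>K. y k m) - (\<Sum>k. y k m)) \<in> l2" "l2norm (\<lambda>m. (\<Sum>k\<le>K. y k m) - (\<Sum>k. y k m)) \<le> R"
    unfolding S_def by auto
qed

lemma conv_l2_series:
  assumes y: "\<And>k. y k \<in> l2" and sm: "summable (\<lambda>k. l2norm (y k))"
  shows "conv_l2 (\<lambda>K m. \<Sum>k\<le>K. y k m) (\<lambda>m. \<Sum>k. y k m)"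
proof -
  have S_l2: "(\<lambda>m. \<Sum>k\<le>K. y k m) \<in> l2" for K using l2_sum[of "{..K}" y] y by auto
  note tail = l2_series_tail[OF y sm]
  have "(\<lambda>m. 1 * (\<Sum>k\<le>0. y k m) + (-1) * ((\<Sum>k\<le>0. y k m) - (\<Sum>k. y k m))) \<in> l2"
    by (rule l2_lincomb[OF S_l2 tail(1)])
  hence "(\<lambda>m. \<Sum>k. y k m) \<in> l2" by simp
  moreover have "(\<lambda>K. (\<Sum>k. l2norm (y k)) - (\<Sum>k\<le>K. l2norm (y k))) \<longlonglongrightarrow> 0"
    using tendsto_diff[OF tendsto_const summable_LIMSEQ'[OF sm], of "\<Sum>k. l2norm (y k)"] by simp
  then have "(\<lambda>K. l2norm (\<lambda>m. (\<Sum>k\<le>K. y k m) - (\<Sum>k. y k m))) \<longlonglongrightarrow> 0"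
    by (rule Lim_null_comparison[rotated]) (use tail l2norm_nonneg in simp)
  ultimately show ?thesis unfolding conv_l2_def using S_l2 by simp
qed

lemma conv_l2_pointwise:
  assumes "conv_l2 S y"
  shows "(\<lambda>K. S K m) \<longlonglongrightarrow> y m"
proof -
  have y: "y \<in> l2" and S: "\<And>K. S K \<in> l2" and lim: "(\<lambda>K. l2norm (\<lambda>m. S K m - y m)) \<longlonglongrightarrow> 0"
    using assms unfolding conv_l2_def by auto
  have "(\<lambda>m. 1 * S K m + (-1) * y m) \<in> l2" for K by (rule l2_lincomb[OF S y])
  hence "cmod (S K m - y m) \<le> l2norm (\<lambda>m. S K m - y m)" for K
    using coord_le_l2norm by force
  hence "(\<lambda>K. S K m - y m) \<longlonglongrightarrow> 0"
    by (intro Lim_null_comparison[OF _ lim] always_eventually allI) simp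
  from tendsto_add[OF this tendsto_const[of "y m"]] show ?thesis by simp
qed

lemma lim_l2_eq:
  assumes "conv_l2 S y"
  shows "lim_l2 S = Some y"
proof -
  have "(THE y. conv_l2 S y) = y"
  proof (rule the_equality)
    fix z assume "conv_l2 S z"
    show "z = y"
      using LIMSEQ_unique[OF conv_l2_pointwise[OF \<open>conv_l2 S z\<close>] conv_l2_pointwise[OF assms]] by blast
  qed (rule assms)
  thus ?thesis using assms unfolding lim_l2_def by auto
qed

lemma lin_hull_induct [consumes 1, case_names zero step]:
  assumes x: "x \<in> lin_hull S"
    and zero: "P (\<lambda>_. 0)"
    and step: "\<And>x v c. x \<in> lin_hull S \<Longrightarrow> P x \<Longrightarrow> v \<in> S \<Longrightarrow> P (\<lambda>m. x m + c * v m)"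
  shows "P x"
proof -
  obtain k and v :: "nat \<Rightarrow> nat \<Rightarrow> complex" and c :: "nat \<Rightarrow> complex" where vS: "\<forall>i<k. v i \<in> S" and x_eq: "x = (\<lambda>m. \<Sum>i<k. c i * v i m)"
    using x unfolding lin_hull_def mem_Collect_eq by blast
  have "(\<lambda>m. \<Sum>i<j. c i * v i m) \<in> lin_hull S \<and> P (\<lambda>m. \<Sum>i<j. c i * v i m)" if "j \<le> k" for j
    using that
  proof (induction j)
    case 0
    have "(\<lambda>m. \<Sum>i<0. c i * v i m) \<in> lin_hull S" unfolding lin_hull_def by blast
    then show ?case using zero by simp
  next
    case (Suc j)
    have "(\<lambda>m. \<Sum>i<Suc j. c i * v i m) \<in> lin_hull S"
      unfolding lin_hull_def using vS Suc.prems by (intro CollectI exI[of _ "Suc j"] exI[of _ v] exI[of _ c]) auto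
    moreover have "P (\<lambda>m. (\<Sum>i<j. c i * v i m) + c j * v j m)"
      using Suc vS by (intro step) auto
    ultimately show ?case by simp
  qed
  thus ?thesis using x_eq by blast
qed

lemma lin_hull_zero: "(\<lambda>_. 0) \<in> lin_hull S"
  unfolding lin_hull_def by (intro CollectI exI[of _ 0]) simp

lemma lin_hull_gen: "v \<in> S \<Longrightarrow> v \<in> lin_hull S"
  unfolding lin_hull_def by (intro CollectI exI[of _ 1] exI[of _ "\<lambda>_. v"] exI[of _ "\<lambda>_. 1"]) simp

lemma lin_hull_lincomb:
  assumes "x \<in> lin_hull S" "y \<in> lin_hull S"
  shows "(\<lambda>m. a * x m + b * y m) \<in> lin_hull S"
proof -
  obtain k and v :: "nat \<Rightarrow> nat \<Rightarrow> complex" and c :: "nat \<Rightarrow> complex" where v: "\<forall>i<k. v i \<in> S" and x: "x = (\<lambda>m. \<Sum>i<k. c i * v i m)"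
    using assms(1) unfolding lin_hull_def mem_Collect_eq by blast
  obtain l and w :: "nat \<Rightarrow> nat \<Rightarrow> complex" and d :: "nat \<Rightarrow> complex" where w: "\<forall>i<l. w i \<in> S" and y: "y = (\<lambda>m. \<Sum>i<l. d i * w i m)"
    using assms(2) unfolding lin_hull_def mem_Collect_eq by blast
  define u where "u i = (if i < k then v i else w (i - k))" for i
  define e where "e i = (if i < k then a * c i else b * d (i - k))" for i
  have "(\<Sum>i<k + l. e i * u i m) = (\<Sum>i<k. e i * u i m) + (\<Sum>i\<in>{k..<k + l}. e i * u i m)" for m
    by (simp add: atLeast0LessThan[symmetric] sum.atLeastLessThan_concat)
  also have "\<dots> m = a * x m + b * y m" for m
    using sum.shift_bounds_nat_ivl[of "\<lambda>i. e i * u i m" 0 k l]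
    by (simp add: x y u_def e_def sum_distrib_left atLeast0LessThan mult.assoc add.commute)
  finally have "(\<lambda>m. a * x m + b * y m) = (\<lambda>m. \<Sum>i<k + l. e i * u i m)" by simp
  moreover have "\<forall>i<k + l. u i \<in> S" using v w by (auto simp: u_def)
  ultimately show ?thesis unfolding lin_hull_def by blast
qed

definition lin_map :: "((nat \<Rightarrow> complex) \<Rightarrow> nat \<Rightarrow> complex) \<Rightarrow> bool" where
  "lin_map h \<longleftrightarrow> (\<forall>x y a b. h (\<lambda>m. a * x m + b * y m) = (\<lambda>m. a * h x m + b * h y m))"

lemma lin_mapD: "lin_map h \<Longrightarrow> h (\<lambda>m. a * x m + b * y m) = (\<lambda>m. a * h x m + b * h y m)"
  by (simp add: lin_map_def)

lemma lin_map_zero: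
  assumes "lin_map h" shows "h (\<lambda>_. 0) = (\<lambda>_. 0)"
  using lin_mapD[OF assms, of 0 "\<lambda>_. 0" 0 "\<lambda>_. 0"] by simp

lemma lin_map_funpow: "lin_map h \<Longrightarrow> lin_map (h ^^ k)"
  by (induction k) (simp_all add: lin_map_def)

lemma lin_hull_invariant:
  assumes h: "lin_map h" and hS: "\<And>v. v \<in> S \<Longrightarrow> h v \<in> lin_hull S" and x: "x \<in> lin_hull S"
  shows "h x \<in> lin_hull S"
  using x
proof (induction rule: lin_hull_induct)
  case zero then show ?case using lin_map_zero[OF h] lin_hull_zero by simp
next
  case (step x v c)
  then show ?case
    using lin_mapD[OF h, of 1 x c v] lin_hull_lincomb[OF step.IH hS[OF step.hyps(2)], of 1 c] by simp
qed

subsection \<open>Geometric decay\<close>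

lemma geometric_bound_of_ratio:
  fixes a :: "nat \<Rightarrow> real"
  assumes r: "0 < r" and ratio: "\<And>k. N \<le> k \<Longrightarrow> a (Suc k) \<le> r * a k"
  shows "\<exists>C. \<forall>k. a k \<le> C * r^k"
proof -
  define C where "C = Max ((\<lambda>i. a i / r^i) ` {..N})"
  have init: "a i \<le> C * r^i" if "i \<le> N" for i
  proof -
    have "a i / r^i \<le> C" unfolding C_def using that by (intro Max_ge) auto
    then show ?thesis using r by (simp add: field_simps)
  qed
  have tail: "a k \<le> C * r^k" if "N \<le> k" for k
    using that
  proof (induction k rule: dec_induct)
    case (step k)
    have "a (Suc k) \<le> r * (C * r^k)"
      using ratio[OF step.hyps(1)] mult_left_mono[OF step.IH less_imp_le[OF r]] by (rule order_trans)
    then show ?case by (simp add: ac_simps)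
  qed (rule init, simp)
  have "a k \<le> C * r^k" for k
    using init tail by (cases "k \<le> N") simp_all
  then show ?thesis by blast
qed

lemma poly_times_geometric_bounded:
  fixes q :: real
  assumes "0 < q" "q < 1"
  obtains K where "\<And>j. (real j + real n) ^ n * q ^ j \<le> K"
proof -
  have "(\<lambda>j. (real j + real n) ^ n * q ^ j) \<longlonglongrightarrow> 0" using assms by real_asymp
  hence "Bseq (\<lambda>j. (real j + real n) ^ n * q ^ j)" by (rule convergent_imp_Bseq[OF convergentI])
  then obtain K where "\<And>j. norm ((real j + real n) ^ n * q ^ j) \<le> K" unfolding Bseq_def by blast
  then have "(real j + real n) ^ n * q ^ j \<le> K" for j
    using abs_ge_self order_trans real_norm_def by metis
  then show ?thesis by (rule that)
qed

definition geometric_decay :: "((nat \<Rightarrow> complex) \<Rightarrow> nat \<Rightarrow> complex) \<Rightarrow> (nat \<Rightarrow> complex) \<Rightarrow> bool" where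
  "geometric_decay h x \<longleftrightarrow>
     (\<exists>C \<sigma>. 0 \<le> \<sigma> \<and> \<sigma> < 1 \<and> (\<forall>k. (h ^^ k) x \<in> l2 \<and> l2norm ((h ^^ k) x) \<le> C * \<sigma>^k))"

lemma geometric_decayE:
  assumes "geometric_decay h x"
  obtains C \<sigma> where "0 \<le> C" "0 \<le> \<sigma>" "\<sigma> < 1" "\<And>k. (h ^^ k) x \<in> l2" "\<And>k. l2norm ((h ^^ k) x) \<le> C * \<sigma>^k"
proof -
  obtain C \<sigma> where "0 \<le> \<sigma>" "\<sigma> < 1" and k: "\<And>k. (h ^^ k) x \<in> l2 \<and> l2norm ((h ^^ k) x) \<le> C * \<sigma>^k"
    using assms unfolding geometric_decay_def by blast
  moreover have "0 \<le> C" using k[of 0] l2norm_nonneg[of x] by simp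
  ultimately show ?thesis using k by (intro that[of C \<sigma>]) auto
qed

lemma geometric_decay_l2: "geometric_decay h x \<Longrightarrow> (h ^^ k) x \<in> l2"
  by (erule geometric_decayE) simp

lemma geometric_decay_lincomb:
  assumes h: "lin_map h" and "geometric_decay h x" "geometric_decay h y"
  shows "geometric_decay h (\<lambda>m. a * x m + b * y m)"
proof -
  obtain C1 \<sigma>1 where C1: "0 \<le> C1" "0 \<le> \<sigma>1" "\<sigma>1 < 1" "\<And>k. (h ^^ k) x \<in> l2"
      and x_bound: "\<And>k. l2norm ((h ^^ k) x) \<le> C1 * \<sigma>1^k"
    by (rule geometric_decayE[OF assms(2)]) blast
  obtain C2 \<sigma>2 where C2: "0 \<le> C2" "0 \<le> \<sigma>2" "\<sigma>2 < 1" "\<And>k. (h ^^ k) y \<in> l2"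
      and y_bound: "\<And>k. l2norm ((h ^^ k) y) \<le> C2 * \<sigma>2^k"
    by (rule geometric_decayE[OF assms(3)]) blast
  define \<sigma> where "\<sigma> = max \<sigma>1 \<sigma>2"
  have iter: "(h ^^ k) (\<lambda>m. a * x m + b * y m) = (\<lambda>m. a * (h ^^ k) x m + b * (h ^^ k) y m)" for k
    using lin_mapD[OF lin_map_funpow[OF h]] .
  have "l2norm ((h ^^ k) (\<lambda>m. a * x m + b * y m)) \<le> (cmod a * C1 + cmod b * C2) * \<sigma>^k" for k
  proof -
    have "l2norm ((h ^^ k) (\<lambda>m. a * x m + b * y m)) \<le> cmod a * (C1 * \<sigma>1^k) + cmod b * (C2 * \<sigma>2^k)"
      unfolding iter using l2norm_lincomb_le[OF C1(4) C2(4), of a k b] x_bound[of k] y_bound[of k]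
      by (meson add_mono mult_left_mono norm_ge_zero order_trans)
    also have "\<dots> \<le> cmod a * (C1 * \<sigma>^k) + cmod b * (C2 * \<sigma>^k)"
      using C1 C2 by (intro add_mono mult_left_mono power_mono) (auto simp: \<sigma>_def)
    finally show ?thesis by (simp add: algebra_simps)
  qed
  moreover have "(h ^^ k) (\<lambda>m. a * x m + b * y m) \<in> l2" for k
    unfolding iter by (intro l2_lincomb C1(4) C2(4))
  moreover have "0 \<le> \<sigma>" "\<sigma> < 1" using C1 C2 by (auto simp: \<sigma>_def)
  ultimately show ?thesis unfolding geometric_decay_def by (intro exI[of _ "cmod a * C1 + cmod b * C2"] exI[of _ \<sigma>]) simp
qed

lemma geometric_decay_lin_hull:
  assumes h: "lin_map h" and S: "\<And>v. v \<in> S \<Longrightarrow> geometric_decay h v" and x: "x \<in> lin_hull S"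
  shows "geometric_decay h x"
  using x
proof (induction rule: lin_hull_induct)
  case zero
  have "(h ^^ k) (\<lambda>_. 0) = (\<lambda>_. 0)" for k by (rule lin_map_zero[OF lin_map_funpow[OF h]])
  then show ?case unfolding geometric_decay_def by (intro exI[of _ 0]) simp
next
  case (step x v c)
  then show ?case using geometric_decay_lincomb[OF h step.IH S, of v 1 c] by simp
qed

lemma geometric_bound_perturbed_iterates:
  fixes u v :: "nat \<Rightarrow> complex"
  assumes l2: "\<And>k. (h ^^ k) u \<in> l2" "\<And>k. (h ^^ k) v \<in> l2"
    and iter: "\<And>k. (h ^^ Suc k) u = (\<lambda>m. \<mu> * (h ^^ k) u m + c * (h ^^ k) v m)"
    and v: "\<And>k. l2norm ((h ^^ k) v) \<le> C' * s^k" and \<mu>: "cmod \<mu> < s"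
  shows "\<exists>C. \<forall>k. l2norm ((h ^^ k) u) \<le> C * s^k"
proof -
  have C'0: "0 \<le> C'" using v[of 0] l2norm_nonneg[OF l2(2)[of 0]] by simp
  have s0: "0 < s" using \<mu> norm_ge_zero[of \<mu>] by linarith
  define C where "C = l2norm u + cmod c * C' / (s - cmod \<mu>)"
  have "(s - cmod \<mu>) * C = (s - cmod \<mu>) * l2norm u + cmod c * C'"
    using \<mu> by (simp add: C_def field_simps)
  moreover have "0 \<le> (s - cmod \<mu>) * l2norm u"
    using \<mu> l2norm_nonneg[OF l2(1)[of 0]] by simp
  ultimately have C_rec: "cmod c * C' \<le> (s - cmod \<mu>) * C" by linarith
  have "l2norm ((h ^^ k) u) \<le> C * s^k" for k
  proof (induction k)
    case 0 then show ?case using \<mu> C'0 by (simp add: C_def)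
  next
    case (Suc k)
    have "l2norm ((h ^^ Suc k) u) \<le> cmod \<mu> * l2norm ((h ^^ k) u) + cmod c * l2norm ((h ^^ k) v)"
      unfolding iter by (rule l2norm_lincomb_le[OF l2])
    also have "\<dots> \<le> cmod \<mu> * (C * s^k) + cmod c * (C' * s^k)"
      using Suc v[of k] by (intro add_mono mult_left_mono) auto
    also have "\<dots> = (cmod \<mu> * C + cmod c * C') * s^k" by (simp add: algebra_simps)
    also have "\<dots> \<le> (cmod \<mu> * C + (s - cmod \<mu>) * C) * s^k"
      using C_rec s0 by (intro mult_right_mono) auto
    also have "\<dots> = C * s^Suc k" by (simp add: algebra_simps)
    finally show ?case .
  qed
  then show ?thesis by blast
qed

lemma geometric_decay_triangular:
  assumes h: "lin_map h" and w: "\<And>n. w n \<in> l2" and \<mu>: "cmod \<mu> < 1"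
    and h0: "h (w 0) = (\<lambda>m. \<mu> * w 0 m)"
    and hSuc: "\<And>n. h (w (Suc n)) = (\<lambda>m. \<mu> * w (Suc n) m + c n * w n m)"
  shows "geometric_decay h (w n)"
proof -
  define s where "s = (1 + cmod \<mu>) / 2"
  have s: "0 \<le> s" "s < 1" "cmod \<mu> < s" using \<mu> by (auto simp: s_def)
  have zero: "(h ^^ k) (\<lambda>_. 0) = (\<lambda>_. 0)" for k by (rule lin_map_zero[OF lin_map_funpow[OF h]])
  have iter0: "(h ^^ Suc k) (w 0) = (\<lambda>m. \<mu> * (h ^^ k) (w 0) m + 0 * (h ^^ k) (\<lambda>_. 0) m)" for k
    unfolding funpow_Suc_right comp_def h0
    using lin_mapD[OF lin_map_funpow[OF h], of k \<mu> "w 0" 0 "w 0"] by simp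
  have iterSuc: "(h ^^ Suc k) (w (Suc n)) = (\<lambda>m. \<mu> * (h ^^ k) (w (Suc n)) m + c n * (h ^^ k) (w n) m)" for k n
    unfolding funpow_Suc_right comp_def hSuc by (rule lin_mapD[OF lin_map_funpow[OF h]])
  have l2: "(h ^^ k) (w n) \<in> l2" for k n
  proof (induction k arbitrary: n)
    case (Suc k)
    then show ?case by (cases n) (simp_all only: iter0 iterSuc zero l2_lincomb l2_zero)
  qed (simp add: w)
  have "\<exists>C. \<forall>k. l2norm ((h ^^ k) (w n)) \<le> C * s^k" for n
  proof (induction n)
    case 0
    have "l2norm ((h ^^ k) (\<lambda>_. 0)) \<le> 0 * s^k" "(h ^^ k) (\<lambda>_. 0) \<in> l2" for k
      by (simp_all add: zero)
    then show ?case using geometric_bound_perturbed_iterates[OF l2 _ iter0 _ s(3)] by blast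
  next
    case (Suc n)
    then show ?case using geometric_bound_perturbed_iterates[OF l2 l2 iterSuc _ s(3)] by blast
  qed
  then obtain C where "\<And>k. l2norm ((h ^^ k) (w n)) \<le> C * s^k" by blast
  then show ?thesis unfolding geometric_decay_def using s l2 by (intro exI[of _ C] exI[of _ s]) auto
qed

definition lower_map :: "(nat \<Rightarrow> complex) \<Rightarrow> (nat \<Rightarrow> complex) \<Rightarrow> nat \<Rightarrow> complex" where
  "lower_map g x = (\<lambda>m. g (m + 2) * x (m + 2))"

definition id_minus_lower :: "(nat \<Rightarrow> complex) \<Rightarrow> (nat \<Rightarrow> complex) \<Rightarrow> nat \<Rightarrow> complex" where
  "id_minus_lower g x = (\<lambda>m. x m - lower_map g x m)"

definition num_map :: "(nat \<Rightarrow> complex) \<Rightarrow> nat \<Rightarrow> complex" where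
  "num_map x = (\<lambda>m. of_nat m * x m)"

lemma lower_op_eq: "x \<in> l2 \<Longrightarrow> lower_map g x \<in> l2 \<Longrightarrow> lower_op g x = Some (lower_map g x)"
  by (simp add: lower_op_def lower_map_def)

lemma N_op_eq: "x \<in> l2 \<Longrightarrow> num_map x \<in> l2 \<Longrightarrow> N_op x = Some (num_map x)"
  by (simp add: N_op_def num_map_def)

lemma lin_map_id_minus_lower: "lin_map (id_minus_lower g)"
  by (simp add: lin_map_def id_minus_lower_def lower_map_def fun_eq_iff algebra_simps)

lemma lin_map_lower: "lin_map (lower_map g)"
  by (simp add: lin_map_def lower_map_def fun_eq_iff algebra_simps)

lemma lin_map_num: "lin_map num_map"
  by (simp add: lin_map_def num_map_def fun_eq_iff algebra_simps)

lemma pow_op_eq_funpow: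
  assumes "\<And>k. (h ^^ k) x \<in> l2" "\<And>k. A ((h ^^ k) x) = Some (h ((h ^^ k) x))"
  shows "pow_op A k x = Some ((h ^^ k) x)"
proof (induction k)
  case 0 then show ?case using assms(1)[of 0] by (simp add: pow_op_def I_op_def)
next
  case (Suc k) then show ?case using assms(2)[of k] by (simp add: pow_op_def comp_op_def)
qed

text \<open>\<open>[N, 1 - B] = 2 B\<close> for the lowering operator \<open>B\<close>, iterated.\<close>
lemma num_map_funpow_id_minus_lower:
  fixes g :: "nat \<Rightarrow> complex"
  defines "T \<equiv> id_minus_lower g"
  shows "num_map ((T ^^ Suc k) x)
    = (\<lambda>m. (T ^^ Suc k) (num_map x) m + 2 * of_nat (Suc k) * ((T ^^ k) x m - (T ^^ Suc k) x m))"
proof (induction k)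
  case 0
  then show ?case by (simp add: T_def id_minus_lower_def lower_map_def num_map_def fun_eq_iff algebra_simps)
next
  case (Suc k)
  have comm: "num_map (T y) = (\<lambda>m. T (num_map y) m + 2 * (y m - T y m))" for y
    by (simp add: T_def id_minus_lower_def lower_map_def num_map_def fun_eq_iff algebra_simps)
  have lin: "T (\<lambda>m. u m + c * (v m - w m)) = (\<lambda>m. T u m + c * (T v m - T w m))" for u v w c
    by (simp add: T_def id_minus_lower_def lower_map_def fun_eq_iff algebra_simps)
  define y where "y = (T ^^ Suc k) x"
  have "num_map ((T ^^ Suc (Suc k)) x) = (\<lambda>m. T (num_map y) m + 2 * (y m - T y m))"
    by (simp add: y_def comm)
  also have "num_map y = (\<lambda>m. (T ^^ Suc k) (num_map x) m + 2 * of_nat (Suc k) * ((T ^^ k) x m - y m))"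
    using Suc by (simp add: y_def)
  finally show ?case
    unfolding lin by (simp add: y_def algebra_simps)
qed

lemma geometric_decay_tendsto_zero:
  assumes "geometric_decay h x"
  shows "(\<lambda>K. (h ^^ K) x m) \<longlonglongrightarrow> 0"
proof -
  obtain C \<sigma> where \<sigma>: "0 \<le> \<sigma>" "\<sigma> < 1" and l2: "\<And>k. (h ^^ k) x \<in> l2"
    and bound: "\<And>k. l2norm ((h ^^ k) x) \<le> C * \<sigma>^k"
    by (rule geometric_decayE[OF assms]) blast
  have coord: "norm ((h ^^ K) x m) \<le> C * \<sigma>^K" for K
    using coord_le_l2norm[OF l2] bound by (metis order_trans)
  have "(\<lambda>K. C * \<sigma>^K) \<longlonglongrightarrow> 0"
    using tendsto_mult_right_zero[OF LIMSEQ_power_zero[of \<sigma>]] \<sigma> by simp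
  then show ?thesis by (rule Lim_null_comparison[OF always_eventually[OF allI[OF coord]]])
qed

subsection \<open>The logarithm of the lowering operator\<close>

text \<open>\<open>log_series g x = - log B x\<close> for \<open>B = lower_map g\<close>, i.e. \<open>\<Sum>k\<ge>1. (1 - B)^k x / k\<close>;
  the \<open>k = 0\<close> term vanishes since division by zero yields zero.\<close>
definition log_series :: "(nat \<Rightarrow> complex) \<Rightarrow> (nat \<Rightarrow> complex) \<Rightarrow> nat \<Rightarrow> complex" where
  "log_series g x = (\<lambda>m. \<Sum>k. 1 / of_nat k * (id_minus_lower g ^^ k) x m)"

lemma log_series_conv:
  assumes "geometric_decay (id_minus_lower g) x"
  shows "conv_l2 (\<lambda>K m. \<Sum>k\<le>K. 1 / of_nat k * (id_minus_lower g ^^ k) x m) (log_series g x)"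
proof -
  let ?T = "id_minus_lower g"
  obtain C \<sigma> where \<sigma>: "0 \<le> \<sigma>" "\<sigma> < 1" and l2: "\<And>k. (?T ^^ k) x \<in> l2"
    and bound: "\<And>k. l2norm ((?T ^^ k) x) \<le> C * \<sigma>^k"
    by (rule geometric_decayE[OF assms]) blast
  have term_le: "l2norm (\<lambda>m. 1 / of_nat k * (?T ^^ k) x m) \<le> C * \<sigma>^k" for k
  proof -
    have "l2norm (\<lambda>m. 1 / of_nat k * (?T ^^ k) x m) \<le> cmod (1 / of_nat k :: complex) * l2norm ((?T ^^ k) x)"
      by (rule l2norm_scale_le[OF l2])
    also have "\<dots> \<le> 1 * l2norm ((?T ^^ k) x)"
      using l2norm_nonneg[OF l2] by (intro mult_right_mono) (cases k, auto simp: norm_divide simp del: of_nat_Suc)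
    finally show ?thesis using bound[of k] by simp
  qed
  have norm_le: "norm (l2norm (\<lambda>m. 1 / of_nat k * (?T ^^ k) x m)) \<le> C * \<sigma>^k" for k
    using term_le[of k] abs_of_nonneg[OF l2norm_nonneg[OF l2_scale[OF l2]]] by (simp only: real_norm_def)
  have "summable (\<lambda>k. C * \<sigma>^k)" using \<sigma> by (simp add: summable_mult)
  hence "summable (\<lambda>k. l2norm (\<lambda>m. 1 / of_nat k * (?T ^^ k) x m))"
    by (rule summable_comparison_test'[OF _ norm_le])
  then show ?thesis unfolding log_series_def by (intro conv_l2_series l2_scale l2)
qed

lemma log_op_lower_op:
  assumes decay: "geometric_decay (id_minus_lower g) x" and lower: "\<And>k. (lower_map g ^^ k) x \<in> l2"
  shows "log_op (lower_op g) x = Some (\<lambda>m. - log_series g x m)"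
proof -
  let ?T = "id_minus_lower g"
  have T_l2: "(?T ^^ k) x \<in> l2" for k by (rule geometric_decay_l2[OF decay])
  have lower_T_l2: "lower_map g y \<in> l2" if "y \<in> l2" "?T y \<in> l2" for y
    using l2_lincomb[OF that, of 1 "-1"] by (simp add: id_minus_lower_def)
  have "lower_op g ((lower_map g ^^ k) x) = Some (lower_map g ((lower_map g ^^ k) x))" for k
    using lower_op_eq[OF lower, of g k] lower[of "Suc k"] by simp
  hence pow_lower: "pow_op (lower_op g) k x = Some ((lower_map g ^^ k) x)" for k
    by (intro pow_op_eq_funpow lower)
  have "diff_op I_op (lower_op g) ((?T ^^ k) x) = Some (?T ((?T ^^ k) x))" for k
    using lower_T_l2[OF T_l2] T_l2[of "Suc k"] lower_op_eq[OF T_l2]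
    by (simp add: diff_op_def I_op_def T_l2 id_minus_lower_def)
  hence pow_T: "pow_op (diff_op I_op (lower_op g)) k x = Some ((?T ^^ k) x)" for k
    by (intro pow_op_eq_funpow T_l2)
  have sums: "(\<lambda>K m. \<Sum>k\<in>{1..K}. 1 / of_nat k * the (pow_op (diff_op I_op (lower_op g)) k x) m)
      = (\<lambda>K m. \<Sum>k\<le>K. 1 / of_nat k * (?T ^^ k) x m)"
    by (simp add: pow_T atMost_atLeast0 sum.atLeast_Suc_atMost)
  show ?thesis
    unfolding log_op_def sums lim_l2_eq[OF log_series_conv[OF decay]]
    by (simp add: dom_op_def pow_lower pow_T)
qed

lemma num_map_log_series:
  assumes decay: "geometric_decay (id_minus_lower g) x" "geometric_decay (id_minus_lower g) (num_map x)"
  shows "num_map (log_series g x) = (\<lambda>m. log_series g (num_map x) m + 2 * x m)"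
proof
  fix m
  let ?T = "id_minus_lower g"
  let ?S = "\<lambda>x K. \<Sum>k\<le>K. 1 / of_nat k * (?T ^^ k) x m"
  have telescope: "of_nat m * ?S x K = ?S (num_map x) K + 2 * (x m - (?T ^^ K) x m)" for K
  proof (induction K)
    case (Suc K)
    have step: "of_nat m * (1 / of_nat (Suc K) * (?T ^^ Suc K) x m)
        = 1 / of_nat (Suc K) * (?T ^^ Suc K) (num_map x) m + 2 * ((?T ^^ K) x m - (?T ^^ Suc K) x m)"
      using fun_cong[OF num_map_funpow_id_minus_lower[where g=g and k=K and x=x], of m]
      by (simp add: num_map_def field_simps del: funpow.simps of_nat_Suc)
    have "of_nat m * ?S x (Suc K) = of_nat m * ?S x K + of_nat m * (1 / of_nat (Suc K) * (?T ^^ Suc K) x m)"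
      by (simp add: distrib_left del: funpow.simps of_nat_Suc)
    also have "\<dots> = ?S (num_map x) (Suc K) + 2 * (x m - (?T ^^ Suc K) x m)"
      unfolding Suc.IH step by (simp add: algebra_simps del: funpow.simps of_nat_Suc)
    finally show ?case .
  qed simp
  have "(\<lambda>K. of_nat m * ?S x K) \<longlonglongrightarrow> of_nat m * log_series g x m"
    by (intro tendsto_mult tendsto_const conv_l2_pointwise[OF log_series_conv[OF decay(1)]])
  moreover have "(\<lambda>K. ?S (num_map x) K + 2 * (x m - (?T ^^ K) x m)) \<longlonglongrightarrow> log_series g (num_map x) m + 2 * (x m - 0)"
    by (intro tendsto_intros conv_l2_pointwise[OF log_series_conv[OF decay(2)]]
        geometric_decay_tendsto_zero[OF decay(1)])
  ultimately have "of_nat m * log_series g x m = log_series g (num_map x) m + 2 * (x m - 0)"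
    unfolding telescope by (rule LIMSEQ_unique)
  then show "num_map (log_series g x) m = log_series g (num_map x) m + 2 * x m"
    by (simp add: num_map_def)
qed

lemma log_series_l2: "geometric_decay (id_minus_lower g) x \<Longrightarrow> log_series g x \<in> l2"
  using log_series_conv unfolding conv_l2_def by blast

lemma commutator_num_log_lower:
  assumes decay: "\<And>x. x \<in> V \<Longrightarrow> geometric_decay (id_minus_lower g) x"
    and lower_inv: "\<And>x. x \<in> V \<Longrightarrow> lower_map g x \<in> V"
    and num_inv: "\<And>x. x \<in> V \<Longrightarrow> num_map x \<in> V"
  shows "comm_eq_on N_op (scale_op (\<i> / 2) (log_op (lower_op g))) (scale_op (- \<i>) I_op) V"
  unfolding comm_eq_on_def
proof (intro conjI ballI subsetI)
  let ?L = "scale_op (\<i> / 2) (log_op (lower_op g))"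
  have V_l2: "x \<in> l2" if "x \<in> V" for x
    using geometric_decay_l2[OF decay[OF that], of 0] by simp
  have L_eq: "?L x = Some (\<lambda>m. - \<i> / 2 * log_series g x m)" if x: "x \<in> V" for x
  proof -
    have "(lower_map g ^^ k) x \<in> V" for k by (induction k) (simp_all add: x lower_inv)
    then show ?thesis by (simp add: scale_op_def log_op_lower_op[OF decay[OF x]] V_l2)
  qed
  fix \<phi> assume \<phi>: "\<phi> \<in> V"
  define u where "u = (\<lambda>m. - \<i> / 2 * log_series g \<phi> m)"
  have u_l2: "u \<in> l2" unfolding u_def by (intro l2_scale log_series_l2 decay \<phi>)
  have num_u: "num_map u = (\<lambda>m. (- \<i> / 2) * log_series g (num_map \<phi>) m + (- \<i>) * \<phi> m)"
    using num_map_log_series[OF decay[OF \<phi>] decay[OF num_inv[OF \<phi>]]]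
    by (simp add: u_def num_map_def fun_eq_iff algebra_simps)
  have "num_map u \<in> l2"
    unfolding num_u by (intro l2_lincomb log_series_l2 decay num_inv \<phi> V_l2)
  then have N_L: "comp_op N_op ?L \<phi> = Some (\<lambda>m. (- \<i> / 2) * log_series g (num_map \<phi>) m + (- \<i>) * \<phi> m)"
    using L_eq[OF \<phi>] N_op_eq[OF u_l2] num_u by (simp add: comp_op_def u_def)
  have L_N: "comp_op ?L N_op \<phi> = Some (\<lambda>m. - \<i> / 2 * log_series g (num_map \<phi>) m)"
    by (simp add: comp_op_def N_op_eq V_l2 \<phi> num_inv L_eq)
  show "\<phi> \<in> dom_op (comp_op N_op ?L) \<inter> dom_op (comp_op ?L N_op)"
    by (simp add: dom_op_def N_L L_N)
  show "diff_op (comp_op N_op ?L) (comp_op ?L N_op) \<phi> = scale_op (- \<i>) I_op \<phi>"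
    by (simp add: diff_op_def N_L L_N scale_op_def I_op_def V_l2 \<phi>)
qed

subsection \<open>The vectors \<open>(f\<^sub>N L*\<^sup>2)\<^sup>n \<xi>\<^sub>\<alpha>\<close>\<close>

definition falling_fact :: "nat \<Rightarrow> nat \<Rightarrow> complex" where
  "falling_fact n j = (\<Prod>i<n. of_nat j - of_nat i)"

lemma falling_fact_0 [simp]: "falling_fact 0 j = 1"
  by (simp add: falling_fact_def)

lemma falling_fact_Suc: "falling_fact (Suc n) j = falling_fact n j * (of_nat j - of_nat n)"
  by (simp add: falling_fact_def)

lemma falling_fact_Suc_Suc: "falling_fact (Suc n) (Suc j) = of_nat (Suc j) * falling_fact n j"
  unfolding falling_fact_def by (subst prod.lessThan_Suc_shift) simp

lemma falling_fact_Suc_left: "falling_fact (Suc n) j = of_nat j * falling_fact n (j - 1)"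
proof (cases j)
  case 0 then show ?thesis by (simp add: falling_fact_def prod.lessThan_Suc_shift del: prod.lessThan_Suc)
qed (simp add: falling_fact_Suc_Suc)

lemma falling_fact_Suc_right: "falling_fact (Suc n) (Suc j) = falling_fact (Suc n) j + of_nat (Suc n) * falling_fact n j"
  unfolding falling_fact_Suc_Suc[of n j] falling_fact_Suc[of n j] by (simp add: algebra_simps)

lemma norm_falling_fact_le: "cmod (falling_fact n j) \<le> (real j + real n) ^ n"
proof -
  have "cmod (of_nat j - of_nat i :: complex) \<le> real j + real n" if "i < n" for i
    using norm_triangle_ineq4[of "of_nat j :: complex" "of_nat i"] that by simp
  then have "(\<Prod>i<n. cmod (of_nat j - of_nat i :: complex)) \<le> (\<Prod>i<n. real j + real n)"
    by (intro prod_mono) auto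
  then show ?thesis by (simp add: falling_fact_def prod_norm)
qed

definition raise_prod :: "(nat \<Rightarrow> complex) \<Rightarrow> nat \<Rightarrow> complex" where
  "raise_prod f k = (\<Prod>i<k. f (2 * i + 2))"

text \<open>The coefficient of \<open>\<xi>\<^sub>\<alpha>\<close> at \<open>\<xi>\<^bsub>2k\<^esub>\<close>.\<close>
definition xi_coeff :: "(nat \<Rightarrow> complex) \<Rightarrow> complex \<Rightarrow> nat \<Rightarrow> complex" where
  "xi_coeff f \<alpha> k = \<alpha>^k * raise_prod f k / of_nat (fact k)"

lemma xi_coeff_Suc: "xi_coeff f \<alpha> (Suc k) = xi_coeff f \<alpha> k * \<alpha> * f (2 * k + 2) / of_nat (Suc k)"
  by (simp add: xi_coeff_def raise_prod_def field_simps)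

text \<open>\<open>p(N/2) \<xi>\<^sub>\<alpha>\<close>\<close>
definition xi_weighted :: "(nat \<Rightarrow> complex) \<Rightarrow> complex \<Rightarrow> (nat \<Rightarrow> complex) \<Rightarrow> nat \<Rightarrow> complex" where
  "xi_weighted f \<alpha> p = (\<lambda>m. if even m then xi_coeff f \<alpha> (m div 2) * p (m div 2) else 0)"

definition xi_raised :: "(nat \<Rightarrow> complex) \<Rightarrow> complex \<Rightarrow> nat \<Rightarrow> nat \<Rightarrow> complex" where
  "xi_raised f \<alpha> n = xi_weighted f \<alpha> (\<lambda>j. falling_fact n j / \<alpha>^n)"

definition raise_map :: "(nat \<Rightarrow> complex) \<Rightarrow> (nat \<Rightarrow> complex) \<Rightarrow> nat \<Rightarrow> complex" where
  "raise_map f x = (\<lambda>m. if 2 \<le> m then f m * x (m - 2) else 0)"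

lemma raise_op_eq: "x \<in> l2 \<Longrightarrow> raise_map f x \<in> l2 \<Longrightarrow> raise_op f x = Some (raise_map f x)"
  by (simp add: raise_op_def raise_map_def)

lemma xi_weighted_lincomb:
  "xi_weighted f \<alpha> (\<lambda>j. a * p j + b * q j) = (\<lambda>m. a * xi_weighted f \<alpha> p m + b * xi_weighted f \<alpha> q m)"
  by (auto simp: xi_weighted_def fun_eq_iff algebra_simps)

lemma num_map_xi_weighted: "num_map (xi_weighted f \<alpha> p) = xi_weighted f \<alpha> (\<lambda>j. 2 * of_nat j * p j)"
  by (auto simp: num_map_def xi_weighted_def fun_eq_iff elim!: evenE)

lemma lower_map_xi_weighted:
  assumes "\<And>j. g (2 * j + 2) * f (2 * j + 2) = of_nat (Suc j) * \<beta>"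
  shows "lower_map g (xi_weighted f \<alpha> p) = xi_weighted f \<alpha> (\<lambda>j. \<alpha> * \<beta> * p (Suc j))"
proof
  fix m
  show "lower_map g (xi_weighted f \<alpha> p) m = xi_weighted f \<alpha> (\<lambda>j. \<alpha> * \<beta> * p (Suc j)) m"
  proof (cases "even m")
    case True
    then obtain j where m: "m = 2 * j" by blast
    have "g (2 * j + 2) * xi_coeff f \<alpha> (Suc j) = xi_coeff f \<alpha> j * \<alpha> * (g (2 * j + 2) * f (2 * j + 2)) / of_nat (Suc j)"
      by (simp add: xi_coeff_Suc)
    also have "\<dots> = xi_coeff f \<alpha> j * \<alpha> * \<beta>"
      by (simp only: assms) (simp del: of_nat_Suc)
    finally show ?thesis using m by (simp add: lower_map_def xi_weighted_def)
  qed (simp add: lower_map_def xi_weighted_def)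
qed

lemma raise_map_xi_weighted:
  assumes "\<alpha> \<noteq> 0"
  shows "raise_map f (xi_weighted f \<alpha> p) = xi_weighted f \<alpha> (\<lambda>j. of_nat j * p (j - 1) / \<alpha>)"
proof
  fix m
  show "raise_map f (xi_weighted f \<alpha> p) m = xi_weighted f \<alpha> (\<lambda>j. of_nat j * p (j - 1) / \<alpha>) m"
  proof (cases "even m \<and> 2 \<le> m")
    case True
    then obtain k where m: "m = 2 * k + 2" by (metis add.commute dvd_def le_add_diff_inverse2 dvd_diff_nat dvd_refl)
    have "f (2 * k + 2) * (xi_coeff f \<alpha> k * p k) = xi_coeff f \<alpha> (Suc k) * (of_nat (Suc k) * p k / \<alpha>)"
      using assms by (simp add: xi_coeff_Suc field_simps del: of_nat_Suc)
    then show ?thesis using m by (simp add: raise_map_def xi_weighted_def)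
  next
    case False
    then show ?thesis by (auto simp: raise_map_def xi_weighted_def elim!: evenE)
  qed
qed

lemma raise_map_xi_raised: "\<alpha> \<noteq> 0 \<Longrightarrow> raise_map f (xi_raised f \<alpha> n) = xi_raised f \<alpha> (Suc n)"
  unfolding xi_raised_def by (simp add: raise_map_xi_weighted falling_fact_Suc_left ac_simps)

lemma num_map_xi_raised:
  "\<alpha> \<noteq> 0 \<Longrightarrow> num_map (xi_raised f \<alpha> n) = (\<lambda>m. 2 * \<alpha> * xi_raised f \<alpha> (Suc n) m + 2 * of_nat n * xi_raised f \<alpha> n m)"
  unfolding xi_raised_def num_map_xi_weighted xi_weighted_lincomb[symmetric]
  by (rule arg_cong[where f="xi_weighted f \<alpha>"]) (auto simp: fun_eq_iff falling_fact_Suc field_simps)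

lemma lower_map_xi_raised:
  assumes "\<And>j. g (2 * j + 2) * f (2 * j + 2) = of_nat (Suc j) * \<beta>" and "\<alpha> \<noteq> 0"
  shows "lower_map g (xi_raised f \<alpha> 0) = (\<lambda>m. \<alpha> * \<beta> * xi_raised f \<alpha> 0 m)"
    and "lower_map g (xi_raised f \<alpha> (Suc n))
      = (\<lambda>m. \<alpha> * \<beta> * xi_raised f \<alpha> (Suc n) m + of_nat (Suc n) * \<beta> * xi_raised f \<alpha> n m)"
proof -
  show "lower_map g (xi_raised f \<alpha> 0) = (\<lambda>m. \<alpha> * \<beta> * xi_raised f \<alpha> 0 m)"
    unfolding xi_raised_def lower_map_xi_weighted[OF assms(1)] by (simp add: xi_weighted_def fun_eq_iff)
  show "lower_map g (xi_raised f \<alpha> (Suc n))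
      = (\<lambda>m. \<alpha> * \<beta> * xi_raised f \<alpha> (Suc n) m + of_nat (Suc n) * \<beta> * xi_raised f \<alpha> n m)"
    unfolding xi_raised_def lower_map_xi_weighted[OF assms(1)] xi_weighted_lincomb[symmetric]
    using assms(2) by (intro arg_cong[where f="xi_weighted f \<alpha>"] ext)
      (simp add: falling_fact_Suc_right field_simps del: of_nat_Suc)
qed

subsection \<open>Square summability and the exponential series\<close>

lemma xi_coeff_geometric:
  assumes lim: "(\<lambda>n. ereal (real n / cmod (f (2 * n)))) \<longlonglongrightarrow> Mf"
    and \<alpha>: "\<alpha> \<noteq> 0" "ereal (cmod \<alpha>) < Mf"
  obtains C r where "0 < r" "r < 1" "\<And>k. cmod (xi_coeff f \<alpha> k) \<le> C * r^k"
proof -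
  obtain c where "ereal (cmod \<alpha>) < ereal c" "ereal c < Mf" using ereal_dense2[OF \<alpha>(2)] by blast
  hence c: "cmod \<alpha> < c" "ereal c < Mf" by auto
  have c_pos: "0 < c" using c \<alpha>(1) by (meson norm_ge_zero order_le_less_trans)
  obtain N where N: "\<And>n. N \<le> n \<Longrightarrow> c < real n / cmod (f (2 * n))"
    using order_tendstoD(1)[OF lim c(2)] by (auto simp: eventually_sequentially)
  define r where "r = cmod \<alpha> / c"
  have r: "0 < r" "r < 1" using c c_pos \<alpha>(1) by (auto simp: r_def)
  have "cmod (xi_coeff f \<alpha> (Suc k)) \<le> r * cmod (xi_coeff f \<alpha> k)" if "N \<le> k" for k
  proof -
    have "c < real (Suc k) / cmod (f (2 * k + 2))" using N[of "Suc k"] that by simp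
    hence "cmod (f (2 * k + 2)) \<le> real (Suc k) / c"
      using c_pos by (cases "f (2 * k + 2) = 0") (simp_all add: field_simps)
    hence "cmod (xi_coeff f \<alpha> k) * cmod \<alpha> * cmod (f (2 * k + 2)) / real (Suc k)
        \<le> cmod (xi_coeff f \<alpha> k) * cmod \<alpha> * (real (Suc k) / c) / real (Suc k)"
      by (intro divide_right_mono mult_left_mono) auto
    also have "\<dots> = r * cmod (xi_coeff f \<alpha> k)" by (simp add: r_def del: of_nat_Suc)
    finally show ?thesis by (simp add: xi_coeff_Suc norm_mult norm_divide del: of_nat_Suc)
  qed
  then obtain C where "\<And>k. cmod (xi_coeff f \<alpha> k) \<le> C * r^k"
    using geometric_bound_of_ratio[OF r(1), of N "\<lambda>k. cmod (xi_coeff f \<alpha> k)"] by blast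
  with r that show ?thesis by blast
qed

lemma xi_weighted_l2:
  assumes bound: "\<And>j. cmod (xi_coeff f \<alpha> j * p j) \<le> D * \<rho>^j" and \<rho>: "0 \<le> \<rho>" "\<rho> < 1"
  shows "xi_weighted f \<alpha> p \<in> l2"
proof (rule l2_geometric_bound)
  have "cmod (xi_coeff f \<alpha> 0 * p 0) \<le> D" using bound[of 0] by simp
  then have D: "0 \<le> D" using norm_ge_zero order_trans by blast
  show "cmod (xi_weighted f \<alpha> p m) \<le> D * sqrt \<rho> ^ m" for m
  proof (cases "even m")
    case True
    then obtain j where "m = 2 * j" by blast
    then show ?thesis using bound[of j] \<rho> by (simp add: xi_weighted_def power_mult)
  qed (simp add: xi_weighted_def D \<rho>)
qed (use \<rho> in auto)

lemma xi_raised_l2: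
  assumes lim: "(\<lambda>n. ereal (real n / cmod (f (2 * n)))) \<longlonglongrightarrow> Mf"
    and \<alpha>: "\<alpha> \<noteq> 0" "ereal (cmod \<alpha>) < Mf"
  shows "xi_raised f \<alpha> n \<in> l2"
proof -
  obtain C r where r: "0 < r" "r < 1" and C: "\<And>k. cmod (xi_coeff f \<alpha> k) \<le> C * r^k"
    using xi_coeff_geometric[OF lim \<alpha>] by blast
  have "cmod (xi_coeff f \<alpha> 0) \<le> C" using C[of 0] by simp
  then have C0: "0 \<le> C" using norm_ge_zero order_trans by blast
  define s where "s = sqrt r"
  have s: "0 < s" "s < 1" "r^j = s^j * s^j" for j using r by (auto simp: s_def power_mult_distrib[symmetric])
  obtain K where K: "\<And>j. (real j + real n) ^ n * s ^ j \<le> K" using poly_times_geometric_bounded[OF s(1,2)] by blast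
  show ?thesis unfolding xi_raised_def
  proof (rule xi_weighted_l2)
    fix j
    have "cmod (xi_coeff f \<alpha> j * (falling_fact n j / \<alpha>^n))
        \<le> C * r^j * (real j + real n)^n / cmod \<alpha> ^ n"
      using C0 r by (auto simp: norm_mult norm_divide norm_power
          intro!: divide_right_mono mult_mono C norm_falling_fact_le)
    also have "\<dots> = C / cmod \<alpha> ^ n * ((real j + real n)^n * s^j) * s^j" by (simp add: s(3))
    also have "\<dots> \<le> C / cmod \<alpha> ^ n * K * s^j" using C0 s by (intro mult_right_mono mult_left_mono K) auto
    finally show "cmod (xi_coeff f \<alpha> j * (falling_fact n j / \<alpha>^n)) \<le> C * K / cmod \<alpha> ^ n * s^j"
      by simp
  qed (use s in auto)
qed

lemma pow_op_scaled_raise_Omega: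
  "pow_op (scale_op \<alpha> (raise_op f)) k Omega = Some (\<lambda>m. if m = 2 * k then \<alpha>^k * raise_prod f k else 0)"
proof (induction k)
  case 0
  show ?case using l2_single[of 0 "1 :: complex"]
    by (simp add: pow_op_def I_op_def raise_prod_def Omega_def basis_vec_def fun_eq_iff)
next
  case (Suc k)
  let ?u = "\<lambda>m. if m = 2 * k then \<alpha>^k * raise_prod f k else 0"
  have raised: "(\<lambda>m. if 2 \<le> m then f m * ?u (m - 2) else 0) = (\<lambda>m. if m = 2 * k + 2 then f (2 * k + 2) * (\<alpha>^k * raise_prod f k) else 0)"
    by (auto simp: fun_eq_iff)
  have "(\<lambda>m. \<alpha> * (if m = 2 * k + 2 then f (2 * k + 2) * (\<alpha>^k * raise_prod f k) else 0))
      = (\<lambda>m. if m = 2 * Suc k then \<alpha>^Suc k * raise_prod f (Suc k) else 0)"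
    by (auto simp: fun_eq_iff raise_prod_def)
  with Suc show ?case
    by (simp add: pow_op_def comp_op_def scale_op_def raise_op_def Let_def raised l2_single)
qed

lemma xi_vec_eq:
  assumes lim: "(\<lambda>n. ereal (real n / cmod (f (2 * n)))) \<longlonglongrightarrow> Mf"
    and \<alpha>: "\<alpha> \<noteq> 0" "ereal (cmod \<alpha>) < Mf"
  shows "xi_vec \<alpha> f = Some (xi_raised f \<alpha> 0)"
proof -
  define y where "y k = (\<lambda>m. if m = 2 * k then xi_coeff f \<alpha> k else 0)" for k
  have terms: "(\<lambda>K m. \<Sum>k\<le>K. 1 / of_nat (fact k) * the (pow_op (scale_op \<alpha> (raise_op f)) k Omega) m)
      = (\<lambda>K m. \<Sum>k\<le>K. y k m)"
    by (intro ext sum.cong refl) (simp add: pow_op_scaled_raise_Omega y_def xi_coeff_def)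
  obtain C r where r: "0 < r" "r < 1" and C: "\<And>k. cmod (xi_coeff f \<alpha> k) \<le> C * r^k"
    using xi_coeff_geometric[OF lim \<alpha>] by blast
  have "summable (\<lambda>k. C * r^k)" using r by (simp add: summable_mult)
  hence "summable (\<lambda>k. l2norm (y k))"
    by (rule summable_comparison_test'[where N=0]) (simp add: y_def l2norm_single C)
  hence conv: "conv_l2 (\<lambda>K m. \<Sum>k\<le>K. y k m) (\<lambda>m. \<Sum>k. y k m)"
    by (intro conv_l2_series) (simp add: y_def l2_single)
  have "(\<lambda>k. y k m) sums xi_raised f \<alpha> 0 m" for m
  proof (cases "even m")
    case True
    then have "(\<lambda>k. y k m) = (\<lambda>k. if k = m div 2 then xi_coeff f \<alpha> k else 0)" by (auto simp: y_def)
    then show ?thesis using True sums_single[of "m div 2"] by (simp add: xi_raised_def xi_weighted_def)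
  next
    case False
    then have "(\<lambda>k. y k m) = (\<lambda>_. 0)" by (auto simp: y_def fun_eq_iff)
    then show ?thesis using False by (simp add: xi_raised_def xi_weighted_def)
  qed
  then have "(\<lambda>m. \<Sum>k. y k m) = xi_raised f \<alpha> 0" by (simp add: sums_iff fun_eq_iff)
  then show ?thesis using conv unfolding xi_vec_def exp_op_def terms
    by (simp add: dom_op_def pow_op_scaled_raise_Omega lim_l2_eq)
qed

lemma pow_raise_op_xi_raised:
  assumes lim: "(\<lambda>n. ereal (real n / cmod (f (2 * n)))) \<longlonglongrightarrow> Mf"
    and \<alpha>: "\<alpha> \<noteq> 0" "ereal (cmod \<alpha>) < Mf"
  shows "pow_op (raise_op f) n (xi_raised f \<alpha> 0) = Some (xi_raised f \<alpha> n)"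
proof -
  have iter: "(raise_map f ^^ k) (xi_raised f \<alpha> 0) = xi_raised f \<alpha> k" for k
    by (induction k) (simp_all add: raise_map_xi_raised[OF \<alpha>(1)])
  have l2: "xi_raised f \<alpha> k \<in> l2" for k by (rule xi_raised_l2[OF lim \<alpha>])
  show ?thesis
    using pow_op_eq_funpow[where h="raise_map f" and A="raise_op f" and x="xi_raised f \<alpha> 0"]
    by (simp add: iter l2 raise_op_eq raise_map_xi_raised[OF \<alpha>(1)])
qed

definition raised_family :: "(nat \<Rightarrow> complex) \<Rightarrow> complex set \<Rightarrow> (nat \<Rightarrow> complex) set" where
  "raised_family f A = {xi_raised f \<alpha> n | \<alpha> n. \<alpha> \<in> A}"

lemma xi_raised_in_hull: "\<alpha> \<in> A \<Longrightarrow> xi_raised f \<alpha> n \<in> lin_hull (raised_family f A)"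
  by (rule lin_hull_gen) (auto simp: raised_family_def)

lemma lower_map_raised_hull:
  assumes gf: "\<And>j. g (2 * j + 2) * f (2 * j + 2) = of_nat (Suc j) * \<beta>" and A: "0 \<notin> A"
    and x: "x \<in> lin_hull (raised_family f A)"
  shows "lower_map g x \<in> lin_hull (raised_family f A)"
proof (rule lin_hull_invariant[OF lin_map_lower _ x])
  fix v assume "v \<in> raised_family f A"
  then obtain \<alpha> n where \<alpha>: "\<alpha> \<in> A" and v: "v = xi_raised f \<alpha> n" by (auto simp: raised_family_def)
  have "\<alpha> \<noteq> 0" using \<alpha> A by blast
  note gen = xi_raised_in_hull[OF \<alpha>]
  show "lower_map g v \<in> lin_hull (raised_family f A)"
  proof (cases n)
    case 0
    then show ?thesis
      using lin_hull_lincomb[OF gen gen, where a = "\<alpha> * \<beta>" and b = 0] lower_map_xi_raised(1)[OF gf \<open>\<alpha> \<noteq> 0\<close>]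
      by (simp add: v)
  next
    case (Suc k)
    then show ?thesis
      using lin_hull_lincomb[OF gen gen] lower_map_xi_raised(2)[OF gf \<open>\<alpha> \<noteq> 0\<close>] by (simp add: v)
  qed
qed

lemma num_map_raised_hull:
  assumes A: "0 \<notin> A" and x: "x \<in> lin_hull (raised_family f A)"
  shows "num_map x \<in> lin_hull (raised_family f A)"
proof (rule lin_hull_invariant[OF lin_map_num _ x])
  fix v assume "v \<in> raised_family f A"
  then obtain \<alpha> n where \<alpha>: "\<alpha> \<in> A" and v: "v = xi_raised f \<alpha> n" by (auto simp: raised_family_def)
  have "\<alpha> \<noteq> 0" using \<alpha> A by blast
  then show "num_map v \<in> lin_hull (raised_family f A)"
    using lin_hull_lincomb[OF xi_raised_in_hull[OF \<alpha>] xi_raised_in_hull[OF \<alpha>]] num_map_xi_raised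
    by (simp add: v)
qed

lemma raised_hull_decay:
  assumes gf: "\<And>j. g (2 * j + 2) * f (2 * j + 2) = of_nat (Suc j) * \<beta>"
    and lim: "(\<lambda>n. ereal (real n / cmod (f (2 * n)))) \<longlonglongrightarrow> Mf"
    and A: "\<And>\<alpha>. \<alpha> \<in> A \<Longrightarrow> \<alpha> \<noteq> 0 \<and> ereal (cmod \<alpha>) < Mf \<and> cmod (1 - \<alpha> * \<beta>) < 1"
    and x: "x \<in> lin_hull (raised_family f A)"
  shows "geometric_decay (id_minus_lower g) x"
proof (rule geometric_decay_lin_hull[OF lin_map_id_minus_lower _ x])
  fix v assume "v \<in> raised_family f A"
  then obtain \<alpha> n where \<alpha>: "\<alpha> \<in> A" and v: "v = xi_raised f \<alpha> n" by (auto simp: raised_family_def)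
  have \<alpha>0: "\<alpha> \<noteq> 0" using A[OF \<alpha>] by blast
  show "geometric_decay (id_minus_lower g) v"
    unfolding v
  proof (rule geometric_decay_triangular[where \<mu> = "1 - \<alpha> * \<beta>" and c = "\<lambda>n. - (of_nat (Suc n) * \<beta>)"])
    show "xi_raised f \<alpha> k \<in> l2" for k using A[OF \<alpha>] by (intro xi_raised_l2[OF lim]) auto
    show "id_minus_lower g (xi_raised f \<alpha> 0) = (\<lambda>m. (1 - \<alpha> * \<beta>) * xi_raised f \<alpha> 0 m)"
      by (simp add: id_minus_lower_def lower_map_xi_raised(1)[OF gf \<alpha>0] algebra_simps)
    show "id_minus_lower g (xi_raised f \<alpha> (Suc k))
        = (\<lambda>m. (1 - \<alpha> * \<beta>) * xi_raised f \<alpha> (Suc k) m + - (of_nat (Suc k) * \<beta>) * xi_raised f \<alpha> k m)" for k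
      by (simp add: id_minus_lower_def lower_map_xi_raised(2)[OF gf \<alpha>0] algebra_simps del: of_nat_Suc)
  qed (use A[OF \<alpha>] lin_map_id_minus_lower in auto)
qed

lemma weight_products_linear:
  fixes f g :: "nat \<Rightarrow> complex"
  assumes "\<forall>n. even n \<longrightarrow> g (n + 2) * f (n + 2) - (if 2 \<le> n then g n * f n else 0) = \<beta>"
  shows "g (2 * j + 2) * f (2 * j + 2) = of_nat (Suc j) * \<beta>"
proof (induction j)
  case 0 then show ?case using assms[rule_format, of 0] by simp
next
  case (Suc j)
  then show ?case using assms[rule_format, of "2 * j + 2"] by (simp add: algebra_simps)
qed

lemma D_setD: "\<alpha> \<in> D_set \<beta> Mf \<Longrightarrow> \<alpha> \<noteq> 0 \<and> ereal (cmod \<alpha>) < Mf \<and> cmod (1 - \<alpha> * \<beta>) < 1"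
  by (auto simp: D_set_def)

theorem mainTheorem7:
  fixes f g :: "nat \<Rightarrow> complex" and \<beta> :: complex and Mf :: ereal
  assumes "\<forall>n. even n \<longrightarrow> g (n + 2) * f (n + 2) - (if 2 \<le> n then g n * f n else 0) = \<beta>"
    and "\<forall>n\<ge>1. cmod (f (2 * n)) > 0"
    and "(\<lambda>n. ereal (real n / cmod (f (2 * n)))) \<longlonglongrightarrow> Mf"
  shows "(\<forall>n. \<forall>\<alpha>\<in>D_set \<beta> Mf. \<exists>\<xi> v. xi_vec \<alpha> f = Some \<xi> \<and> pow_op (raise_op f) n \<xi> = Some v)
    \<and> comm_eq_on N_op (scale_op (\<i> / 2) (log_op (lower_op g))) (scale_op (- \<i>) I_op)
        (lin_hull {v. \<exists>n. \<exists>\<alpha>\<in>D_set \<beta> Mf. \<exists>\<xi>. xi_vec \<alpha> f = Some \<xi> \<and> pow_op (raise_op f) n \<xi> = Some v})"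
proof -
  note gf = weight_products_linear[OF assms(1)]
  have raised: "xi_vec \<alpha> f = Some (xi_raised f \<alpha> 0) \<and> pow_op (raise_op f) n (xi_raised f \<alpha> 0) = Some (xi_raised f \<alpha> n)"
    if "\<alpha> \<in> D_set \<beta> Mf" for \<alpha> n
    using xi_vec_eq[OF assms(3)] pow_raise_op_xi_raised[OF assms(3)] D_setD[OF that] by blast
  then have generators: "{v. \<exists>n. \<exists>\<alpha>\<in>D_set \<beta> Mf. \<exists>\<xi>. xi_vec \<alpha> f = Some \<xi> \<and> pow_op (raise_op f) n \<xi> = Some v}
      = raised_family f (D_set \<beta> Mf)"
    by (auto simp: raised_family_def)
  have "0 \<notin> D_set \<beta> Mf" using D_setD by blast
  then have "comm_eq_on N_op (scale_op (\<i> / 2) (log_op (lower_op g))) (scale_op (- \<i>) I_op)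
      (lin_hull (raised_family f (D_set \<beta> Mf)))"
    by (intro commutator_num_log_lower raised_hull_decay[OF gf assms(3) D_setD]
        lower_map_raised_hull[OF gf] num_map_raised_hull)
  with raised show ?thesis unfolding generators by blast
qed

end
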